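(* Consider the system (P) described in the context, and its constant (spatially homogeneous, time-independent) nonnegative steady states $(U,V)$. Then: (i) if $b\le0$, the only such steady state is $E_0=(0,0)$; (ii) if $b>0$ and $\frac{b\beta}{\alpha d e^{\alpha\tau}}\le1$, the constant steady states are $E_0=(0,0)$ and $E_1=(b/d,0)$; (iii) if $\frac{b\beta}{\alpha d e^{\alpha\tau}}>1$, then besides $E_0=(0,0)$ and $E_1=(b/d,0)$ there is a unique constant steady state $E_3=(U_3,V_3)$ with $U_3>0$ and $V_3>0$.
   Context: Let $\alpha,\beta,d,h>0$, $\kappa>0$, $d_1,d_2>0$, $\tau>0$ be constants and $b\in\mathbb{R}$. Let $\Gamma(x,y,a)$, $x,y\in[0,\pi]$, $a>0$, be the Green's function of $\partial_aW=d_2\partial_{xx}W-\alpha W$ on $(0,\pi)$ with Neumann conditions $\partial_xW(a,0)=\partial_xW(a,\pi)=0$ (so $\int_0^\pi\Gamma(x,y,a)\,dy=e^{-\alpha a}$). System (P): for $t>0$, $x\in(0,\pi)$, $\partial_tU=d_1\partial_{xx}U-\frac{\beta UV}{1+hV}+U\Big[b-dU-\frac{\beta}{\kappa}\int_0^\tau\int_0^\pi\Gamma(x,y,a)\frac{U(t-a,y)V(t-a,y)}{1+hV(t-a,y)}\,dy\,da\Big]$, $\partial_tV=d_2\partial_{xx}V-\alpha V+\beta\int_0^\pi\Gamma(x,y,\tau)\frac{U(t-\tau,y)V(t-\tau,y)}{1+hV(t-\tau,y)}\,dy$, with $\partial_xU=\partial_xV=0$ at $x=0,\pi$. *)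

theory Defs
  imports "HOL-Analysis.Analysis"
begin

definition incid :: "real \<Rightarrow> real \<Rightarrow> real \<Rightarrow> real" where
  "incid h U V = U * V / (1 + h * V)"

text \<open>(U,V) is a constant (spatially homogeneous, time-independent) nonnegative steady state
  of system (P) with kernel Gamma: the constant functions U(t,x)=U, V(t,x)=V satisfy both
  equations (time derivatives and second x-derivatives of constants vanish, Neumann
  conditions hold trivially) at every x in (0,pi).\<close>
definition const_steady_state ::
  "(real \<Rightarrow> real \<Rightarrow> real \<Rightarrow> real) \<Rightarrow> real \<Rightarrow> real \<Rightarrow> real \<Rightarrow> real \<Rightarrow> real \<Rightarrow> real \<Rightarrow> real
   \<Rightarrow> real \<Rightarrow> real \<Rightarrow> bool" where
  "const_steady_state \<Gamma> \<alpha> \<beta> d h \<kappa> b \<tau> U V \<longleftrightarrow>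
     U \<ge> 0 \<and> V \<ge> 0 \<and>
     (\<forall>x\<in>{0<..<pi}.
        0 = - \<beta> * incid h U V
            + U * (b - d * U - \<beta> / \<kappa> *
                integral {0..\<tau>} (\<lambda>a. integral {0..pi} (\<lambda>y. \<Gamma> x y a * incid h U V))) \<and>
        0 = - \<alpha> * V + \<beta> * integral {0..pi} (\<lambda>y. \<Gamma> x y \<tau> * incid h U V))"

end

theory Submission
  imports Defs
begin

text \<open>For constant states the kernel integrals are explicit, since \<open>\<Gamma>\<close> has mass \<open>e\<^sup>-\<^sup>\<alpha>\<^sup>a\<close>,
  so steady states solve an algebraic system. The predator equation forces \<open>V = 0\<close> or
  \<open>U = \<alpha> e\<^sup>\<alpha>\<^sup>\<tau> (1 + h V) / \<beta>\<close>; in the latter case the prey equation becomes \<open>F V = 0\<close> for a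
  function \<open>F\<close> that is strictly decreasing on \<open>[0, \<infinity>)\<close>, tends to \<open>-\<infinity>\<close>, and has
  \<open>F 0 = b - d \<alpha> e\<^sup>\<alpha>\<^sup>\<tau> / \<beta>\<close>. So a positive root exists, and is then unique, exactly when
  \<open>b \<beta> / (\<alpha> d e\<^sup>\<alpha>\<^sup>\<tau>) > 1\<close>.\<close>

lemma has_integral_exp_neg_mult:
  fixes \<alpha> \<tau> :: real
  assumes "\<alpha> \<noteq> 0" "0 \<le> \<tau>"
  shows "((\<lambda>a. exp (- \<alpha> * a)) has_integral (1 - exp (- \<alpha> * \<tau>)) / \<alpha>) {0..\<tau>}"
proof -
  have "((\<lambda>a. exp (- \<alpha> * a)) has_integral (- exp (- \<alpha> * \<tau>) / \<alpha> - (- exp (- \<alpha> * 0) / \<alpha>))) {0..\<tau>}"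
  proof (rule fundamental_theorem_of_calculus[OF assms(2)])
    fix a :: real
    have "((\<lambda>a. - exp (- \<alpha> * a) / \<alpha>) has_real_derivative exp (- \<alpha> * a)) (at a within {0..\<tau>})"
      using assms(1) by (auto intro!: derivative_eq_intros)
    then show "((\<lambda>a. - exp (- \<alpha> * a) / \<alpha>) has_vector_derivative exp (- \<alpha> * a)) (at a within {0..\<tau>})"
      by (simp add: has_real_derivative_iff_has_vector_derivative)
  qed
  then show ?thesis by (simp add: diff_divide_distrib)
qed

text \<open>The kernel at age \<open>a = 0\<close> is unconstrained, but \<open>{0}\<close> is a null set.\<close>
lemma integral_delay_kernel_mult_const:
  fixes \<Gamma> :: "real \<Rightarrow> real \<Rightarrow> real \<Rightarrow> real" and \<alpha> \<tau> I x :: real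
  assumes "\<alpha> \<noteq> 0" "0 \<le> \<tau>"
    and kernel: "\<And>a. a > 0 \<Longrightarrow> ((\<lambda>y. \<Gamma> x y a) has_integral exp (- \<alpha> * a)) {0..pi}"
  shows "integral {0..\<tau>} (\<lambda>a. integral {0..pi} (\<lambda>y. \<Gamma> x y a * I)) = I * (1 - exp (- \<alpha> * \<tau>)) / \<alpha>"
proof -
  have "integral {0..\<tau>} (\<lambda>a. integral {0..pi} (\<lambda>y. \<Gamma> x y a * I))
        = integral {0..\<tau>} (\<lambda>a. exp (- \<alpha> * a) * I)"
  proof (rule integral_spike[of "{0}"])
    show "exp (- \<alpha> * a) * I = integral {0..pi} (\<lambda>y. \<Gamma> x y a * I)" if "a \<in> {0..\<tau>} - {0}" for a
      using that by (intro integral_unique[symmetric] has_integral_mult_left kernel) auto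
  qed simp
  also have "\<dots> = (1 - exp (- \<alpha> * \<tau>)) / \<alpha> * I"
    using has_integral_mult_left[OF has_integral_exp_neg_mult[OF assms(1,2)]] by (rule integral_unique)
  finally show ?thesis by simp
qed

text \<open>\<open>E\<close> stands for \<open>e\<^sup>\<alpha>\<^sup>\<tau>\<close>: for constant \<open>U, V\<close> the two kernel integrals of the incidence
  \<open>I\<close> are \<open>I (1 - 1/E) / \<alpha>\<close> and \<open>I / E\<close>.\<close>
definition homogeneous_equilibrium ::
  "real \<Rightarrow> real \<Rightarrow> real \<Rightarrow> real \<Rightarrow> real \<Rightarrow> real \<Rightarrow> real \<Rightarrow> real \<Rightarrow> real \<Rightarrow> bool" where
  "homogeneous_equilibrium \<alpha> \<beta> d h \<kappa> b E U V \<longleftrightarrow>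
     U \<ge> 0 \<and> V \<ge> 0 \<and>
     0 = - \<beta> * incid h U V + U * (b - d * U - \<beta> / \<kappa> * (incid h U V * (1 - 1 / E) / \<alpha>)) \<and>
     0 = - \<alpha> * V + \<beta> * (incid h U V / E)"

lemma const_steady_state_iff_homogeneous_equilibrium:
  fixes \<Gamma> :: "real \<Rightarrow> real \<Rightarrow> real \<Rightarrow> real" and \<alpha> \<beta> d h \<kappa> b \<tau> U V :: real
  assumes "\<alpha> \<noteq> 0" "\<tau> > 0"
    and Gamma_int: "\<And>x a. x \<in> {0..pi} \<Longrightarrow> a > 0 \<Longrightarrow>
                      ((\<lambda>y. \<Gamma> x y a) has_integral exp (- \<alpha> * a)) {0..pi}"
  shows "const_steady_state \<Gamma> \<alpha> \<beta> d h \<kappa> b \<tau> U V \<longleftrightarrow>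
         homogeneous_equilibrium \<alpha> \<beta> d h \<kappa> b (exp (\<alpha> * \<tau>)) U V"
proof -
  have delay: "integral {0..\<tau>} (\<lambda>a. integral {0..pi} (\<lambda>y. \<Gamma> x y a * incid h U V))
                 = incid h U V * (1 - 1 / exp (\<alpha> * \<tau>)) / \<alpha>"
    and maturation: "integral {0..pi} (\<lambda>y. \<Gamma> x y \<tau> * incid h U V) = incid h U V / exp (\<alpha> * \<tau>)"
    if "x \<in> {0<..<pi}" for x
  proof -
    have x: "x \<in> {0..pi}"
      using that by simp
    show "integral {0..\<tau>} (\<lambda>a. integral {0..pi} (\<lambda>y. \<Gamma> x y a * incid h U V))
            = incid h U V * (1 - 1 / exp (\<alpha> * \<tau>)) / \<alpha>"
      using integral_delay_kernel_mult_const[where \<Gamma> = \<Gamma> and x = x,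
          OF assms(1) less_imp_le[OF assms(2)] Gamma_int[OF x]]
      by (simp add: exp_minus inverse_eq_divide)
    show "integral {0..pi} (\<lambda>y. \<Gamma> x y \<tau> * incid h U V) = incid h U V / exp (\<alpha> * \<tau>)"
      using integral_unique[OF has_integral_mult_left[OF Gamma_int[OF x assms(2)]]] by (simp add: exp_minus inverse_eq_divide)
  qed
  have "pi / 2 \<in> {0<..<pi}"
    by simp
  then show ?thesis
    unfolding const_steady_state_def homogeneous_equilibrium_def
    by (simp only: delay maturation cong: ball_cong) blast
qed

lemma predator_equation_iff:
  assumes "\<alpha> > 0" "\<beta> > 0" "h > 0" "E > 0" "V > 0"
  shows "0 = - \<alpha> * V + \<beta> * (incid h U V / E) \<longleftrightarrow> U = \<alpha> * E / \<beta> * (1 + h * V)"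
proof -
  define D where "D = E * (1 + h * V)"
  have "D > 0"
    using assms by (simp add: D_def add_pos_nonneg)
  have incid_over_E: "\<beta> * (incid h U V / E) = \<beta> * U * V / D"
    by (simp add: incid_def D_def mult_ac)
  have "0 = - \<alpha> * V + \<beta> * (incid h U V / E) \<longleftrightarrow> \<alpha> * V * D = \<beta> * U * V"
    unfolding incid_over_E using \<open>D > 0\<close> by (auto simp: field_simps)
  also have "\<dots> \<longleftrightarrow> V * (\<alpha> * E * (1 + h * V)) = V * (\<beta> * U)"
    by (simp add: D_def mult_ac)
  also have "\<dots> \<longleftrightarrow> \<alpha> * E * (1 + h * V) = \<beta> * U"
    using assms(5) by simp
  also have "\<dots> \<longleftrightarrow> U = \<alpha> * E / \<beta> * (1 + h * V)"
    using assms(2) by (auto simp: field_simps)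
  finally show ?thesis .
qed

lemma homogeneous_equilibrium_prey_only:
  assumes "d > 0"
  shows "homogeneous_equilibrium \<alpha> \<beta> d h \<kappa> b E U 0 \<longleftrightarrow> U = 0 \<or> (b > 0 \<and> U = b / d)"
proof -
  have "homogeneous_equilibrium \<alpha> \<beta> d h \<kappa> b E U 0 \<longleftrightarrow> U \<ge> 0 \<and> U * (b - d * U) = 0"
    unfolding homogeneous_equilibrium_def incid_def by auto
  also have "\<dots> \<longleftrightarrow> U = 0 \<or> (b > 0 \<and> U = b / d)"
    using assms by (auto simp: field_simps zero_less_mult_iff)
  finally show ?thesis .
qed

text \<open>The prey equation divided by \<open>U\<close>, after eliminating \<open>U = \<alpha> E (1 + h V) / \<beta>\<close> by the
  predator equation.\<close>
definition coexistence_residual ::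
  "real \<Rightarrow> real \<Rightarrow> real \<Rightarrow> real \<Rightarrow> real \<Rightarrow> real \<Rightarrow> real \<Rightarrow> real \<Rightarrow> real" where
  "coexistence_residual \<alpha> \<beta> d h \<kappa> b E V =
     b - d * (\<alpha> * E / \<beta>) * (1 + h * V) - \<beta> * V / (1 + h * V) - (E - 1) * V / \<kappa>"

lemma homogeneous_equilibrium_coexistence:
  assumes "\<alpha> > 0" "\<beta> > 0" "h > 0" "\<kappa> > 0" "E > 0" "V > 0"
  shows "homogeneous_equilibrium \<alpha> \<beta> d h \<kappa> b E U V \<longleftrightarrow>
         U = \<alpha> * E / \<beta> * (1 + h * V) \<and> coexistence_residual \<alpha> \<beta> d h \<kappa> b E V = 0"
proof -
  have hV: "1 + h * V > 0"
    using assms by (simp add: add_pos_nonneg)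
  have prey: "- \<beta> * incid h U V + U * (b - d * U - \<beta> / \<kappa> * (incid h U V * (1 - 1 / E) / \<alpha>))
              = U * coexistence_residual \<alpha> \<beta> d h \<kappa> b E V"
    if U: "U = \<alpha> * E / \<beta> * (1 + h * V)"
  proof -
    have "incid h U V = \<alpha> * E / \<beta> * V"
      using hV by (simp add: incid_def U)
    then have maturing: "\<beta> / \<kappa> * (incid h U V * (1 - 1 / E) / \<alpha>) = (E - 1) * V / \<kappa>"
      using assms by (simp add: field_simps)
    have "d * (\<alpha> * E / \<beta>) * (1 + h * V) = d * U"
      by (simp add: U)
    moreover have "\<beta> * incid h U V = U * (\<beta> * V / (1 + h * V))"
      by (simp add: incid_def)
    ultimately show ?thesis
      unfolding maturing coexistence_residual_def by (simp add: algebra_simps)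
  qed
  have "U > 0" if "U = \<alpha> * E / \<beta> * (1 + h * V)"
    using assms hV that by simp
  then show ?thesis
    unfolding homogeneous_equilibrium_def
    using predator_equation_iff[OF assms(1-3,5,6)] prey assms(6) by auto
qed

lemma homogeneous_equilibria_eq:
  assumes "\<alpha> > 0" "\<beta> > 0" "d > 0" "h > 0" "\<kappa> > 0" "E > 0"
  shows "{(U, V). homogeneous_equilibrium \<alpha> \<beta> d h \<kappa> b E U V}
         = {(0, 0)} \<union> (if b > 0 then {(b / d, 0)} else {})
           \<union> (\<lambda>V. (\<alpha> * E / \<beta> * (1 + h * V), V)) ` {V. V > 0 \<and> coexistence_residual \<alpha> \<beta> d h \<kappa> b E V = 0}"
proof (intro set_eqI, clarify)
  fix U V :: real
  consider "V < 0" | "V = 0" | "V > 0"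
    by linarith
  then show "(U, V) \<in> {(U, V). homogeneous_equilibrium \<alpha> \<beta> d h \<kappa> b E U V} \<longleftrightarrow>
             (U, V) \<in> {(0, 0)} \<union> (if b > 0 then {(b / d, 0)} else {})
               \<union> (\<lambda>V. (\<alpha> * E / \<beta> * (1 + h * V), V)) ` {V. V > 0 \<and> coexistence_residual \<alpha> \<beta> d h \<kappa> b E V = 0}"
  proof cases
    case 1
    then show ?thesis
      by (auto simp: homogeneous_equilibrium_def)
  next
    case 2
    then show ?thesis
      using homogeneous_equilibrium_prey_only[OF assms(3)] by auto
  next
    case 3
    then show ?thesis
      using homogeneous_equilibrium_coexistence[OF assms(1,2,4,5,6) 3] by auto
  qed
qed

lemma const_steady_states_eq:
  fixes \<Gamma> :: "real \<Rightarrow> real \<Rightarrow> real \<Rightarrow> real" and \<alpha> \<beta> d h \<kappa> b \<tau> :: real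
  assumes "\<alpha> > 0" "\<beta> > 0" "d > 0" "h > 0" "\<kappa> > 0" "\<tau> > 0"
    and Gamma_int: "\<And>x a. x \<in> {0..pi} \<Longrightarrow> a > 0 \<Longrightarrow>
                      ((\<lambda>y. \<Gamma> x y a) has_integral exp (- \<alpha> * a)) {0..pi}"
  defines "E \<equiv> exp (\<alpha> * \<tau>)"
  shows "{(U, V). const_steady_state \<Gamma> \<alpha> \<beta> d h \<kappa> b \<tau> U V}
         = {(0, 0)} \<union> (if b > 0 then {(b / d, 0)} else {})
           \<union> (\<lambda>V. (\<alpha> * E / \<beta> * (1 + h * V), V)) ` {V. V > 0 \<and> coexistence_residual \<alpha> \<beta> d h \<kappa> b E V = 0}"
proof -
  have "{(U, V). const_steady_state \<Gamma> \<alpha> \<beta> d h \<kappa> b \<tau> U V}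
        = {(U, V). homogeneous_equilibrium \<alpha> \<beta> d h \<kappa> b E U V}"
    using const_steady_state_iff_homogeneous_equilibrium[OF _ assms(6) Gamma_int] assms(1)
    by (simp add: E_def)
  also have "\<dots> = {(0, 0)} \<union> (if b > 0 then {(b / d, 0)} else {})
           \<union> (\<lambda>V. (\<alpha> * E / \<beta> * (1 + h * V), V)) ` {V. V > 0 \<and> coexistence_residual \<alpha> \<beta> d h \<kappa> b E V = 0}"
    by (rule homogeneous_equilibria_eq[OF assms(1-5)]) (simp add: E_def)
  finally show ?thesis .
qed

lemma coexistence_residual_strict_decreasing:
  assumes "\<alpha> > 0" "\<beta> > 0" "d > 0" "h > 0" "\<kappa> > 0" "E \<ge> 1" "0 \<le> x" "x < y"
  shows "coexistence_residual \<alpha> \<beta> d h \<kappa> b E y < coexistence_residual \<alpha> \<beta> d h \<kappa> b E x"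
proof -
  have "1 + h * x > 0" "1 + h * y > 0"
    using assms by (auto simp: add_pos_nonneg)
  then have "x / (1 + h * x) \<le> y / (1 + h * y)"
    using assms by (simp add: divide_simps algebra_simps)
  then have "\<beta> * x / (1 + h * x) \<le> \<beta> * y / (1 + h * y)"
    using assms(2) by (metis mult_left_mono less_imp_le times_divide_eq_right)
  moreover have "(E - 1) * x / \<kappa> \<le> (E - 1) * y / \<kappa>"
    using assms by (intro divide_right_mono mult_left_mono) auto
  moreover have "d * (\<alpha> * E / \<beta>) * (1 + h * x) < d * (\<alpha> * E / \<beta>) * (1 + h * y)"
    using assms by (intro mult_strict_left_mono) auto
  ultimately show ?thesis
    unfolding coexistence_residual_def by linarith
qed

lemma coexistence_roots_empty:
  assumes "\<alpha> > 0" "\<beta> > 0" "d > 0" "h > 0" "\<kappa> > 0" "E \<ge> 1"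
    and "b \<le> d * (\<alpha> * E / \<beta>)"
  shows "{V. V > 0 \<and> coexistence_residual \<alpha> \<beta> d h \<kappa> b E V = 0} = {}"
proof -
  have "coexistence_residual \<alpha> \<beta> d h \<kappa> b E V < 0" if "V > 0" for V
    using coexistence_residual_strict_decreasing[OF assms(1-6) order_refl that] assms(7)
    by (simp add: coexistence_residual_def)
  then show ?thesis
    by fastforce
qed

lemma coexistence_roots_singleton:
  assumes "\<alpha> > 0" "\<beta> > 0" "d > 0" "h > 0" "\<kappa> > 0" "E \<ge> 1"
    and "b > d * (\<alpha> * E / \<beta>)"
  obtains V3 where "V3 > 0" "{V. V > 0 \<and> coexistence_residual \<alpha> \<beta> d h \<kappa> b E V = 0} = {V3}"
proof -
  let ?F = "coexistence_residual \<alpha> \<beta> d h \<kappa> b E"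
  define c where "c = d * (\<alpha> * E / \<beta>)"
  define M where "M = b / (c * h)"
  have "c > 0"
    using assms by (simp add: c_def)
  moreover have "b > c"
    using assms by (simp add: c_def)
  ultimately have "b > 0"
    by simp
  then have "M > 0"
    using \<open>c > 0\<close> assms(4) by (simp add: M_def)
  have "\<beta> * M / (1 + h * M) \<ge> 0" "(E - 1) * M / \<kappa> \<ge> 0"
    using \<open>M > 0\<close> assms by simp_all
  moreover have "c * (1 + h * M) = c + b"
    using \<open>c > 0\<close> assms by (simp add: M_def field_simps)
  ultimately have "?F M \<le> 0"
    using \<open>c > 0\<close> unfolding coexistence_residual_def c_def[symmetric] by linarith
  moreover have "?F 0 \<ge> 0"
    using assms by (simp add: coexistence_residual_def)
  moreover have "continuous_on {0..M} ?F"
    unfolding coexistence_residual_def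
    using assms by (intro continuous_intros) (auto simp: add_nonneg_eq_0_iff)
  ultimately obtain V3 where V3: "0 \<le> V3" "?F V3 = 0"
    using IVT2'[of ?F M 0 0] \<open>M > 0\<close> by auto
  have "V3 \<noteq> 0"
    using V3(2) assms by (auto simp: coexistence_residual_def)
  with V3 have "V3 > 0"
    by simp
  have "W = V3" if "W > 0" "?F W = 0" for W
    using coexistence_residual_strict_decreasing[OF assms(1-6), of V3 W b]
      coexistence_residual_strict_decreasing[OF assms(1-6), of W V3 b] that V3
    by (cases W V3 rule: linorder_cases) auto
  with \<open>V3 > 0\<close> V3(2) have "{V. V > 0 \<and> ?F V = 0} = {V3}"
    by blast
  with \<open>V3 > 0\<close> show ?thesis
    by (rule that)
qed

theorem theorem5p1:
  fixes \<Gamma> :: "real \<Rightarrow> real \<Rightarrow> real \<Rightarrow> real"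
    and \<alpha> \<beta> d h \<kappa> d1 d2 \<tau> b :: real
  assumes pos: "\<alpha> > 0" "\<beta> > 0" "d > 0" "h > 0" "\<kappa> > 0" "d1 > 0" "d2 > 0" "\<tau> > 0"
    and Gamma_int: "\<And>x a. x \<in> {0..pi} \<Longrightarrow> a > 0 \<Longrightarrow>
                      ((\<lambda>y. \<Gamma> x y a) has_integral exp (- \<alpha> * a)) {0..pi}"
  defines "S \<equiv> {(U, V). const_steady_state \<Gamma> \<alpha> \<beta> d h \<kappa> b \<tau> U V}"
  shows "(b \<le> 0 \<longrightarrow> S = {(0, 0)})
       \<and> (b > 0 \<and> b * \<beta> / (\<alpha> * d * exp (\<alpha> * \<tau>)) \<le> 1 \<longrightarrow> S = {(0, 0), (b / d, 0)})
       \<and> (b * \<beta> / (\<alpha> * d * exp (\<alpha> * \<tau>)) > 1 \<longrightarrow>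
            (\<exists>U3 V3. U3 > 0 \<and> V3 > 0 \<and> S = {(0, 0), (b / d, 0), (U3, V3)}))"
proof -
  define E where "E = exp (\<alpha> * \<tau>)"
  have "E \<ge> 1" "d * (\<alpha> * E / \<beta>) > 0"
    using pos by (simp_all add: E_def)
  let ?U = "\<lambda>V. \<alpha> * E / \<beta> * (1 + h * V)"
  let ?roots = "{V. V > 0 \<and> coexistence_residual \<alpha> \<beta> d h \<kappa> b E V = 0}"
  have S_eq: "S = {(0, 0)} \<union> (if b > 0 then {(b / d, 0)} else {}) \<union> (\<lambda>V. (?U V, V)) ` ?roots"
    unfolding S_def E_def by (rule const_steady_states_eq[OF pos(1-5,8) Gamma_int])
  have threshold: "b * \<beta> / (\<alpha> * d * exp (\<alpha> * \<tau>)) \<le> 1 \<longleftrightarrow> b \<le> d * (\<alpha> * E / \<beta>)"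
    using pos \<open>E \<ge> 1\<close> by (simp add: E_def field_simps)
  note no_roots = coexistence_roots_empty[OF pos(1-5) \<open>E \<ge> 1\<close>]
  show ?thesis
  proof (intro conjI impI)
    assume "b \<le> 0"
    moreover from this have "b \<le> d * (\<alpha> * E / \<beta>)"
      using \<open>d * (\<alpha> * E / \<beta>) > 0\<close> by linarith
    ultimately show "S = {(0, 0)}"
      using S_eq no_roots by simp
  next
    assume "b > 0 \<and> b * \<beta> / (\<alpha> * d * exp (\<alpha> * \<tau>)) \<le> 1"
    then show "S = {(0, 0), (b / d, 0)}"
      using S_eq no_roots threshold by auto
  next
    assume "b * \<beta> / (\<alpha> * d * exp (\<alpha> * \<tau>)) > 1"
    then have "b > d * (\<alpha> * E / \<beta>)"
      using threshold by simp
    then obtain V3 where "V3 > 0" "?roots = {V3}"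
      using coexistence_roots_singleton[OF pos(1-5) \<open>E \<ge> 1\<close>] by blast
    moreover have "b > 0"
      using \<open>b > d * (\<alpha> * E / \<beta>)\<close> \<open>d * (\<alpha> * E / \<beta>) > 0\<close> by linarith
    ultimately have "S = {(0, 0), (b / d, 0), (?U V3, V3)}"
      using S_eq by auto
    moreover have "?U V3 > 0"
      using pos \<open>E \<ge> 1\<close> \<open>V3 > 0\<close> by (simp add: add_pos_nonneg)
    ultimately show "\<exists>U3 V3. U3 > 0 \<and> V3 > 0 \<and> S = {(0, 0), (b / d, 0), (U3, V3)}"
      using \<open>V3 > 0\<close> by blast
  qed
qed

end
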